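(* For every $\rho\ge0$, $x_0\in\mathcal X$, $\gamma\ge0$, the conditional ambiguity set $$\mathcal B_{x_0,\gamma}(\mathbb B^\infty_\rho)=\Big\{\mu_0\in\mathcal M(\mathcal Y):\exists\,\mathbb Q\in\mathbb B^\infty_\rho\text{ with }\mathbb Q(\mathcal N_\gamma(x_0)\times\mathcal Y)>0\text{ and }\mathbb Q(\mathcal N_\gamma(x_0)\times A)=\mu_0(A)\,\mathbb Q(\mathcal N_\gamma(x_0)\times\mathcal Y)\ \forall A\subseteq\mathcal Y\text{ measurable}\Big\}$$ is convex.
   Context: Continuous metrics $\mathbb D_{\mathcal X}$ on $\mathcal X\subseteq\mathbb R^n$ and $\mathbb D_{\mathcal Y}$ on $\mathcal Y\subseteq\mathbb R^m$, $\mathbb D=\mathbb D_{\mathcal X}+\mathbb D_{\mathcal Y}$; data $(\hat x_i,\hat y_i)\in\mathcal X\times\mathcal Y$, $\hat{\mathbb P}=\frac1N\sum_i\delta_{(\hat x_i,\hat y_i)}$; $\mathbb W_\infty(\mathbb Q_1,\mathbb Q_2)=\inf_{\pi\in\Pi(\mathbb Q_1,\mathbb Q_2)}\operatorname{ess\,sup}_\pi\mathbb D(\xi_1,\xi_2)$; $\mathbb B^\infty_\rho=\{\mathbb Q:\mathbb W_\infty(\mathbb Q,\hat{\mathbb P})\le\rho\}$; $\mathcal M(\mathcal Y)$ is the set of Borel probability measures on $\mathcal Y$; $\mathcal N_\gamma(x_0)=\{x\in\mathcal X:\mathbb D_{\mathcal X}(x,x_0)\le\gamma\}$. *)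

theory Defs
  imports "HOL-Probability.Probability"
begin

definition cont_metric_on :: "'a::euclidean_space set \<Rightarrow> ('a \<Rightarrow> 'a \<Rightarrow> real) \<Rightarrow> bool" where
  "cont_metric_on S d \<longleftrightarrow>
     (\<forall>x\<in>S. \<forall>y\<in>S. 0 \<le> d x y \<and> (d x y = 0 \<longleftrightarrow> x = y) \<and> d x y = d y x) \<and>
     (\<forall>x\<in>S. \<forall>y\<in>S. \<forall>z\<in>S. d x z \<le> d x y + d y z) \<and>
     continuous_on (S \<times> S) (\<lambda>(x, y). d x y)"

definition borel_probs :: "'a::topological_space set \<Rightarrow> 'a measure set" where
  "borel_probs S = {Q. prob_space Q \<and> sets Q = sets (restrict_space borel S)}"

definition sum_metric :: "('a \<Rightarrow> 'a \<Rightarrow> real) \<Rightarrow> ('b \<Rightarrow> 'b \<Rightarrow> real) \<Rightarrow> ('a \<times> 'b) \<Rightarrow> ('a \<times> 'b) \<Rightarrow> real" where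
  "sum_metric DX DY p q = DX (fst p) (fst q) + DY (snd p) (snd q)"

definition couplings :: "'a::topological_space set \<Rightarrow> 'a measure \<Rightarrow> 'a measure \<Rightarrow> ('a \<times> 'a) measure set" where
  "couplings S Q1 Q2 = {\<pi> \<in> borel_probs (S \<times> S).
       distr \<pi> (restrict_space borel S) fst = Q1 \<and> distr \<pi> (restrict_space borel S) snd = Q2}"

definition W_inf :: "'a::topological_space set \<Rightarrow> ('a \<Rightarrow> 'a \<Rightarrow> real) \<Rightarrow> 'a measure \<Rightarrow> 'a measure \<Rightarrow> ereal" where
  "W_inf S D Q1 Q2 = (INF \<pi> \<in> couplings S Q1 Q2. esssup \<pi> (\<lambda>z. ereal (D (fst z) (snd z))))"

definition empirical :: "'a::topological_space set \<Rightarrow> nat \<Rightarrow> (nat \<Rightarrow> 'a) \<Rightarrow> 'a measure" where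
  "empirical S N d = measure_of S (sets (restrict_space borel S))
      (\<lambda>A. ennreal (real (card {i. i < N \<and> d i \<in> A}) / real N))"

definition Winf_ball ::
  "'a::euclidean_space set \<Rightarrow> 'b::euclidean_space set \<Rightarrow> ('a \<Rightarrow> 'a \<Rightarrow> real) \<Rightarrow> ('b \<Rightarrow> 'b \<Rightarrow> real)
   \<Rightarrow> nat \<Rightarrow> (nat \<Rightarrow> 'a \<times> 'b) \<Rightarrow> real \<Rightarrow> ('a \<times> 'b) measure set" where
  "Winf_ball X Y DX DY N d \<rho> = {Q \<in> borel_probs (X \<times> Y).
      W_inf (X \<times> Y) (sum_metric DX DY) Q (empirical (X \<times> Y) N d) \<le> ereal \<rho>}"

definition nbhd :: "'a set \<Rightarrow> ('a \<Rightarrow> 'a \<Rightarrow> real) \<Rightarrow> real \<Rightarrow> 'a \<Rightarrow> 'a set" where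
  "nbhd X DX \<gamma> x0 = {x \<in> X. DX x x0 \<le> \<gamma>}"

definition cond_ambiguity ::
  "'a::euclidean_space set \<Rightarrow> 'b::euclidean_space set \<Rightarrow> ('a \<Rightarrow> 'a \<Rightarrow> real) \<Rightarrow> 'a \<Rightarrow> real
   \<Rightarrow> ('a \<times> 'b) measure set \<Rightarrow> 'b measure set" where
  "cond_ambiguity X Y DX x0 \<gamma> B = {\<mu>0 \<in> borel_probs Y. \<exists>Q \<in> B.
      measure Q (nbhd X DX \<gamma> x0 \<times> Y) > 0 \<and>
      (\<forall>A \<in> sets (restrict_space borel Y).
          measure Q (nbhd X DX \<gamma> x0 \<times> A) = measure \<mu>0 A * measure Q (nbhd X DX \<gamma> x0 \<times> Y))}"

definition mix_measure :: "'a::topological_space set \<Rightarrow> real \<Rightarrow> 'a measure \<Rightarrow> 'a measure \<Rightarrow> 'a measure" where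
  "mix_measure S t \<mu>1 \<mu>2 = measure_of S (sets (restrict_space borel S))
      (\<lambda>A. ennreal t * emeasure \<mu>1 A + ennreal (1 - t) * emeasure \<mu>2 A)"

definition convex_measure_set :: "'a::topological_space set \<Rightarrow> 'a measure set \<Rightarrow> bool" where
  "convex_measure_set S M \<longleftrightarrow>
     (\<forall>\<mu>1\<in>M. \<forall>\<mu>2\<in>M. \<forall>t::real. 0 \<le> t \<and> t \<le> 1 \<longrightarrow> mix_measure S t \<mu>1 \<mu>2 \<in> M)"

end

theory Submission
  imports Defs
begin

text \<open>
  Mixing preserves the Wasserstein ball: the l-mixture of couplings of Q1 and Q2 with the empirical
  measure couples the l-mixture of Q1 and Q2 with it, and its essential supremum of the cost is at most
  the larger of the two. Conditioning the mixture Q of Q1 and Q2 on U \<times> Y, with U the neighbourhood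
  of x0, yields the mixture of the two conditionals weighted by l Q1(U \<times> Y) and (1 - l) Q2(U \<times> Y);
  choosing l so that these weights are proportional to t and 1 - t exhibits the t-mixture of two
  conditionals as a conditional of Q. Only the convexity of the ball enters.
\<close>

lemma sigma_algebra_restrict_borel: "sigma_algebra S (sets (restrict_space borel S))"
  using sets.sigma_algebra_axioms[of "restrict_space borel S"] by (simp add: space_restrict_space)

lemma sets_measure_of_restrict_borel [simp]:
  "sets (measure_of S (sets (restrict_space borel S)) f) = sets (restrict_space borel S)"
  by (simp add: sigma_algebra.sets_measure_of_eq[OF sigma_algebra_restrict_borel])

lemma space_measure_of_restrict_borel [simp]:
  "space (measure_of S (sets (restrict_space borel S)) f) = S"
  by (simp add: sigma_algebra.space_measure_of_eq[OF sigma_algebra_restrict_borel])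

lemma sets_mix_measure [simp]: "sets (mix_measure S t \<mu>1 \<mu>2) = sets (restrict_space borel S)"
  and space_mix_measure [simp]: "space (mix_measure S t \<mu>1 \<mu>2) = S"
  by (simp_all add: mix_measure_def)

lemma emeasure_mix_measure:
  assumes s1: "sets \<mu>1 = sets (restrict_space borel S)" and s2: "sets \<mu>2 = sets (restrict_space borel S)"
    and A: "A \<in> sets (restrict_space borel S)"
  shows "emeasure (mix_measure S t \<mu>1 \<mu>2) A
           = ennreal t * emeasure \<mu>1 A + ennreal (1 - t) * emeasure \<mu>2 A"
proof -
  let ?M = "sets (restrict_space borel S)"
  let ?f = "\<lambda>A. ennreal t * emeasure \<mu>1 A + ennreal (1 - t) * emeasure \<mu>2 A"
  have "countably_additive ?M ?f"
    unfolding countably_additive_def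
  proof (intro allI impI)
    fix A :: "nat \<Rightarrow> _" assume A: "range A \<subseteq> ?M" "disjoint_family A" "(\<Union>i. A i) \<in> ?M"
    have "(\<Sum>i. emeasure \<mu>1 (A i)) = emeasure \<mu>1 (\<Union>i. A i)"
      using A s1 by (intro suminf_emeasure) auto
    moreover have "(\<Sum>i. emeasure \<mu>2 (A i)) = emeasure \<mu>2 (\<Union>i. A i)"
      using A s2 by (intro suminf_emeasure) auto
    ultimately show "(\<Sum>i. ?f (A i)) = ?f (\<Union>i. A i)"
      by (simp add: suminf_add[symmetric])
  qed
  then show ?thesis
    unfolding mix_measure_def
    by (intro emeasure_measure_of_sigma[OF sigma_algebra_restrict_borel _ _ A])
       (simp_all add: positive_def)
qed

lemma mix_measure_in_borel_probs:
  assumes "\<mu>1 \<in> borel_probs S" "\<mu>2 \<in> borel_probs S" "0 \<le> t" "t \<le> 1"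
  shows "mix_measure S t \<mu>1 \<mu>2 \<in> borel_probs S"
proof -
  have S: "S \<in> sets (restrict_space borel S)"
    using sets.top[of "restrict_space borel S"] by (simp add: space_restrict_space)
  have "emeasure \<mu> S = 1" if "\<mu> \<in> borel_probs S" for \<mu>
  proof -
    have "space \<mu> = S"
      using that sets_eq_imp_space_eq[of \<mu> "restrict_space borel S"]
      by (simp add: borel_probs_def space_restrict_space)
    then show ?thesis
      using that prob_space.emeasure_space_1[of \<mu>] by (simp add: borel_probs_def)
  qed
  with assms have "emeasure (mix_measure S t \<mu>1 \<mu>2) S = 1"
    by (simp add: emeasure_mix_measure[OF _ _ S] borel_probs_def
        ennreal_plus[symmetric] del: ennreal_plus)
  then show ?thesis
    by (auto simp: borel_probs_def intro: prob_spaceI)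
qed

lemma measure_mix_measure:
  assumes "\<mu>1 \<in> borel_probs S" "\<mu>2 \<in> borel_probs S" "0 \<le> t" "t \<le> 1"
  shows "measure (mix_measure S t \<mu>1 \<mu>2) A = t * measure \<mu>1 A + (1 - t) * measure \<mu>2 A"
proof (cases "A \<in> sets (restrict_space borel S)")
  case True
  interpret p1: prob_space \<mu>1 using assms(1) by (simp add: borel_probs_def)
  interpret p2: prob_space \<mu>2 using assms(2) by (simp add: borel_probs_def)
  have "emeasure (mix_measure S t \<mu>1 \<mu>2) A = ennreal (t * measure \<mu>1 A + (1 - t) * measure \<mu>2 A)"
    using assms True
    by (simp add: emeasure_mix_measure borel_probs_def p1.emeasure_eq_measure p2.emeasure_eq_measure
        ennreal_mult[symmetric] ennreal_plus[symmetric] del: ennreal_plus)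
  moreover have "0 \<le> t * measure \<mu>1 A + (1 - t) * measure \<mu>2 A"
    using assms by simp
  ultimately show ?thesis
    by (simp add: measure_def[of "mix_measure S t \<mu>1 \<mu>2"] del: ennreal_plus)
next
  case False
  then show ?thesis
    using assms by (simp add: measure_notin_sets borel_probs_def)
qed

lemma mix_measure_same:
  assumes "sets P = sets (restrict_space borel S)" "0 \<le> t" "t \<le> 1"
  shows "mix_measure S t P P = P"
proof (rule measure_eqI)
  fix A assume "A \<in> sets (mix_measure S t P P)"
  then show "emeasure (mix_measure S t P P) A = emeasure P A"
    using assms by (simp add: emeasure_mix_measure distrib_right[symmetric]
        ennreal_plus[symmetric] del: ennreal_plus)
qed (simp add: assms)

lemma distr_mix_measure:
  assumes f: "f \<in> restrict_space borel S \<rightarrow>\<^sub>M restrict_space borel T"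
    and s1: "sets \<mu>1 = sets (restrict_space borel S)" and s2: "sets \<mu>2 = sets (restrict_space borel S)"
  shows "distr (mix_measure S t \<mu>1 \<mu>2) (restrict_space borel T) f
           = mix_measure T t (distr \<mu>1 (restrict_space borel T) f) (distr \<mu>2 (restrict_space borel T) f)"
    (is "?lhs = ?rhs")
proof (rule measure_eqI)
  fix A assume "A \<in> sets ?lhs"
  then have A: "A \<in> sets (restrict_space borel T)" by simp
  have fm: "f \<in> mix_measure S t \<mu>1 \<mu>2 \<rightarrow>\<^sub>M restrict_space borel T"
    "f \<in> \<mu>1 \<rightarrow>\<^sub>M restrict_space borel T" "f \<in> \<mu>2 \<rightarrow>\<^sub>M restrict_space borel T"
    using f s1 s2 by (simp_all cong: measurable_cong_sets)
  have sp: "space \<mu>1 = S" "space \<mu>2 = S"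
    using sets_eq_imp_space_eq[OF s1] sets_eq_imp_space_eq[OF s2]
    by (simp_all add: space_restrict_space)
  have pre: "f -` A \<inter> S \<in> sets (restrict_space borel S)"
    using measurable_sets[OF fm(1) A] by simp
  show "emeasure ?lhs A = emeasure ?rhs A"
    using A pre s1 s2 sp
    by (simp add: emeasure_distr[OF fm(1) A] emeasure_distr[OF fm(2) A] emeasure_distr[OF fm(3) A]
        emeasure_mix_measure)
qed simp

lemma AE_mix_measure:
  assumes s1: "sets \<mu>1 = sets (restrict_space borel S)" and s2: "sets \<mu>2 = sets (restrict_space borel S)"
    and "AE x in \<mu>1. P x" "AE x in \<mu>2. P x"
  shows "AE x in mix_measure S t \<mu>1 \<mu>2. P x"
proof -
  obtain N1 where N1: "{x \<in> space \<mu>1. \<not> P x} \<subseteq> N1" "N1 \<in> null_sets \<mu>1"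
    using assms(3) by (auto elim!: AE_E)
  obtain N2 where N2: "{x \<in> space \<mu>2. \<not> P x} \<subseteq> N2" "N2 \<in> null_sets \<mu>2"
    using assms(4) by (auto elim!: AE_E)
  have "N1 \<inter> N2 \<in> null_sets \<mu>1" "N1 \<inter> N2 \<in> null_sets \<mu>2"
  proof -
    have "N1 \<in> sets \<mu>2" "N2 \<in> sets \<mu>1"
      using N1(2) N2(2) s1 s2 by (simp_all add: null_sets_def)
    then show "N1 \<inter> N2 \<in> null_sets \<mu>1" "N1 \<inter> N2 \<in> null_sets \<mu>2"
      using N1(2) N2(2) by (simp_all add: null_set_Int1 null_set_Int2)
  qed
  then have "N1 \<inter> N2 \<in> null_sets (mix_measure S t \<mu>1 \<mu>2)"
    using s1 by (simp add: null_sets_def emeasure_mix_measure[OF s1 s2])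
  moreover have "{x \<in> S. \<not> P x} \<subseteq> N1 \<inter> N2"
    using N1 N2 sets_eq_imp_space_eq[OF s1] sets_eq_imp_space_eq[OF s2]
    by (auto simp: space_restrict_space)
  ultimately show ?thesis
    by (intro AE_I'[where N = "N1 \<inter> N2"]) auto
qed

lemma esssup_mix_measure_le:
  assumes s1: "sets \<mu>1 = sets (restrict_space borel S)" and s2: "sets \<mu>2 = sets (restrict_space borel S)"
  shows "esssup (mix_measure S t \<mu>1 \<mu>2) f \<le> max (esssup \<mu>1 f) (esssup \<mu>2 f)"
proof (cases "f \<in> borel_measurable \<mu>1")
  case True
  then have "f \<in> borel_measurable (mix_measure S t \<mu>1 \<mu>2)" "f \<in> borel_measurable \<mu>2"
    using s1 s2 by (simp_all cong: measurable_cong_sets)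
  moreover have "AE x in \<mu>1. f x \<le> max (esssup \<mu>1 f) (esssup \<mu>2 f)"
    "AE x in \<mu>2. f x \<le> max (esssup \<mu>1 f) (esssup \<mu>2 f)"
    by (auto intro!: eventually_mono[OF esssup_AE] simp: le_max_iff_disj)
  ultimately show ?thesis
    using s1 s2 by (intro esssup_I AE_mix_measure) auto
next
  case False
  then show ?thesis by (simp add: esssup_non_measurable)
qed

lemma measurable_fst_restrict_borel: "fst \<in> restrict_space borel (S \<times> T) \<rightarrow>\<^sub>M restrict_space borel S"
  and measurable_snd_restrict_borel: "snd \<in> restrict_space borel (S \<times> T) \<rightarrow>\<^sub>M restrict_space borel T"
  by (auto intro!: measurable_restrict_space3 borel_measurable_continuous_onI continuous_intros)

lemma mix_measure_in_couplings:
  assumes \<pi>1: "\<pi>1 \<in> couplings S Q1 P" and \<pi>2: "\<pi>2 \<in> couplings S Q2 P" and t: "0 \<le> t" "t \<le> 1"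
  shows "mix_measure (S \<times> S) t \<pi>1 \<pi>2 \<in> couplings S (mix_measure S t Q1 Q2) P"
proof -
  have b: "\<pi>1 \<in> borel_probs (S \<times> S)" "\<pi>2 \<in> borel_probs (S \<times> S)"
    and s: "sets \<pi>1 = sets (restrict_space borel (S \<times> S))" "sets \<pi>2 = sets (restrict_space borel (S \<times> S))"
    and m: "distr \<pi>1 (restrict_space borel S) fst = Q1" "distr \<pi>1 (restrict_space borel S) snd = P"
      "distr \<pi>2 (restrict_space borel S) fst = Q2" "distr \<pi>2 (restrict_space borel S) snd = P"
    using \<pi>1 \<pi>2 by (auto simp: couplings_def borel_probs_def)
  have "sets P = sets (restrict_space borel S)"
    using m(2) by auto
  then show ?thesis
    using mix_measure_in_borel_probs[OF b t] t m
      distr_mix_measure[OF measurable_fst_restrict_borel s] distr_mix_measure[OF measurable_snd_restrict_borel s]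
    by (simp add: couplings_def mix_measure_same)
qed

lemma le_max_INF_INF:
  fixes w :: "'c::complete_linorder"
  assumes "\<And>x y. x \<in> A \<Longrightarrow> y \<in> B \<Longrightarrow> w \<le> max (f x) (g y)"
  shows "w \<le> max (INF x\<in>A. f x) (INF y\<in>B. g y)"
proof (rule ccontr)
  assume "\<not> ?thesis"
  then obtain x y where "x \<in> A" "f x < w" "y \<in> B" "g y < w"
    by (auto simp: not_le INF_less_iff)
  with assms show False
    by (metis max_less_iff_conj not_le)
qed

lemma W_inf_mix_measure_le:
  assumes "0 \<le> t" "t \<le> 1"
  shows "W_inf S D (mix_measure S t Q1 Q2) P \<le> max (W_inf S D Q1 P) (W_inf S D Q2 P)"
  unfolding W_inf_def
proof (rule le_max_INF_INF)
  let ?cost = "\<lambda>z. ereal (D (fst z) (snd z))"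
  fix \<pi>1 \<pi>2 assume \<pi>: "\<pi>1 \<in> couplings S Q1 P" "\<pi>2 \<in> couplings S Q2 P"
  then have "sets \<pi>1 = sets (restrict_space borel (S \<times> S))" "sets \<pi>2 = sets (restrict_space borel (S \<times> S))"
    by (auto simp: couplings_def borel_probs_def)
  have "(INF \<pi>\<in>couplings S (mix_measure S t Q1 Q2) P. esssup \<pi> ?cost)
      \<le> esssup (mix_measure (S \<times> S) t \<pi>1 \<pi>2) ?cost"
    using mix_measure_in_couplings[OF \<pi> assms] by (rule INF_lower)
  also have "\<dots> \<le> max (esssup \<pi>1 ?cost) (esssup \<pi>2 ?cost)"
    using \<open>sets \<pi>1 = _\<close> \<open>sets \<pi>2 = _\<close> by (rule esssup_mix_measure_le)
  finally show "(INF \<pi>\<in>couplings S (mix_measure S t Q1 Q2) P. esssup \<pi> ?cost)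
      \<le> max (esssup \<pi>1 ?cost) (esssup \<pi>2 ?cost)" .
qed

lemma convex_Winf_ball: "convex_measure_set (X \<times> Y) (Winf_ball X Y DX DY N d \<rho>)"
  unfolding convex_measure_set_def Winf_ball_def
  using W_inf_mix_measure_le mix_measure_in_borel_probs
  by (fastforce intro: order.trans)

lemma conditioning_mixture_weights:
  fixes a b t :: real
  assumes a: "0 < a" and b: "0 < b" and t: "0 \<le> t" "t \<le> 1"
  obtains l c where "0 \<le> l" "l \<le> 1" "0 < c" "l * a = t * c" "(1 - l) * b = (1 - t) * c"
proof
  define den where "den = t * b + (1 - t) * a"
  have den: "0 < den"
  proof (cases "t = 0")
    case False
    then have "0 < t * b" using t b by simp
    moreover have "0 \<le> (1 - t) * a" using t a by simp
    ultimately show ?thesis by (simp add: den_def)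
  qed (simp add: den_def a)
  show "0 \<le> t * b / den" using t b den by simp
  show "t * b / den \<le> 1" using t a den by (simp add: den_def field_simps)
  show "0 < a * b / den" using a b den by simp
  show "t * b / den * a = t * (a * b / den)" by simp
  show "(1 - t * b / den) * b = (1 - t) * (a * b / den)"
    using den by (simp add: den_def field_simps)
qed

lemma convex_cond_ambiguity:
  assumes B: "B \<subseteq> borel_probs (X \<times> Y)" and convex: "convex_measure_set (X \<times> Y) B"
  shows "convex_measure_set Y (cond_ambiguity X Y DX x0 \<gamma> B)"
  unfolding convex_measure_set_def
proof (intro ballI allI impI)
  fix \<mu>1 \<mu>2 and t :: real
  let ?U = "nbhd X DX \<gamma> x0"
  assume \<mu>: "\<mu>1 \<in> cond_ambiguity X Y DX x0 \<gamma> B" "\<mu>2 \<in> cond_ambiguity X Y DX x0 \<gamma> B"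
    and t: "0 \<le> t \<and> t \<le> 1"
  obtain Q1 where \<mu>1: "\<mu>1 \<in> borel_probs Y" and Q1: "Q1 \<in> B" and a: "measure Q1 (?U \<times> Y) > 0"
    and cond1: "\<forall>A \<in> sets (restrict_space borel Y). measure Q1 (?U \<times> A) = measure \<mu>1 A * measure Q1 (?U \<times> Y)"
    using \<mu>(1) unfolding cond_ambiguity_def by blast
  obtain Q2 where \<mu>2: "\<mu>2 \<in> borel_probs Y" and Q2: "Q2 \<in> B" and b: "measure Q2 (?U \<times> Y) > 0"
    and cond2: "\<forall>A \<in> sets (restrict_space borel Y). measure Q2 (?U \<times> A) = measure \<mu>2 A * measure Q2 (?U \<times> Y)"
    using \<mu>(2) unfolding cond_ambiguity_def by blast
  obtain l c where l: "0 \<le> l" "l \<le> 1" and c: "0 < c"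
    and la: "l * measure Q1 (?U \<times> Y) = t * c" and lb: "(1 - l) * measure Q2 (?U \<times> Y) = (1 - t) * c"
    using conditioning_mixture_weights[OF a b] t by metis
  define Q where "Q = mix_measure (X \<times> Y) l Q1 Q2"
  have "Q \<in> B"
    using convex Q1 Q2 l unfolding convex_measure_set_def Q_def by blast
  have mQ: "measure Q E = l * measure Q1 E + (1 - l) * measure Q2 E" for E
    unfolding Q_def using Q1 Q2 B l by (intro measure_mix_measure) auto
  have mQY: "measure Q (?U \<times> Y) = c"
    using la lb by (simp add: mQ algebra_simps)
  show "mix_measure Y t \<mu>1 \<mu>2 \<in> cond_ambiguity X Y DX x0 \<gamma> B"
    unfolding cond_ambiguity_def
  proof (intro CollectI conjI bexI[OF _ \<open>Q \<in> B\<close>] ballI)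
    show "mix_measure Y t \<mu>1 \<mu>2 \<in> borel_probs Y"
      using mix_measure_in_borel_probs[OF \<mu>1 \<mu>2] t by simp
    show "measure Q (?U \<times> Y) > 0" using mQY c by simp
    fix A assume A: "A \<in> sets (restrict_space borel Y)"
    have "measure Q (?U \<times> A)
        = measure \<mu>1 A * (l * measure Q1 (?U \<times> Y)) + measure \<mu>2 A * ((1 - l) * measure Q2 (?U \<times> Y))"
      using cond1 cond2 A by (simp add: mQ)
    also have "\<dots> = (t * measure \<mu>1 A + (1 - t) * measure \<mu>2 A) * c"
      by (simp only: la lb) (simp add: algebra_simps)
    also have "\<dots> = measure (mix_measure Y t \<mu>1 \<mu>2) A * measure Q (?U \<times> Y)"
      using measure_mix_measure[OF \<mu>1 \<mu>2] t mQY by simp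
    finally show "measure Q (?U \<times> A) = measure (mix_measure Y t \<mu>1 \<mu>2) A * measure Q (?U \<times> Y)" .
  qed
qed

theorem lemma5:
  fixes X :: "'a::euclidean_space set" and Y :: "'b::euclidean_space set"
    and DX :: "'a \<Rightarrow> 'a \<Rightarrow> real" and DY :: "'b \<Rightarrow> 'b \<Rightarrow> real"
    and N :: nat and d :: "nat \<Rightarrow> 'a \<times> 'b"
    and \<rho> \<gamma> :: real and x0 :: 'a
  assumes "cont_metric_on X DX" and "cont_metric_on Y DY"
    and "N \<ge> 1" and "\<forall>i<N. d i \<in> X \<times> Y"
    and "\<rho> \<ge> 0" and "x0 \<in> X" and "\<gamma> \<ge> 0"
  shows "convex_measure_set Y (cond_ambiguity X Y DX x0 \<gamma> (Winf_ball X Y DX DY N d \<rho>))"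
proof (rule convex_cond_ambiguity)
  show "Winf_ball X Y DX DY N d \<rho> \<subseteq> borel_probs (X \<times> Y)"
    by (auto simp: Winf_ball_def)
qed (rule convex_Winf_ball)

end
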